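(* Let $\Omega \subset \mathbb{R}^d$ be a bounded domain, let $\mu,\nu$ be Borel probability measures on $\Omega$, let $n\ge1$, and let $\phi:\Omega\to\mathbb{R}$ be a bounded continuous function. Suppose that $\mathcal{J}_1(\phi)\le\mathcal{J}_2(\phi)$ for all empirical measures $\mu_n=\frac1n\sum_{i=1}^n\delta_{X_i}$ and $\nu_n=\frac1n\sum_{i=1}^n\delta_{Y_i}$ with $X_1,\dots,X_n\in\operatorname{supp}(\mu)$ and $Y_1,\dots,Y_n\in\operatorname{supp}(\nu)$, where $\mathcal{J}_1(\phi) = \int_\Omega \phi\,\mathrm{d}\mu_n + \int_\Omega(-\phi)\,\mathrm{d}\nu_n$ and $\mathcal{J}_2(\phi) = \int_\Omega \phi\,\mathrm{d}\mu_n + \int_\Omega \phi^c(\cdot;\mu_n)\,\mathrm{d}\nu_n$. Then $\phi(x)-\phi(y)\le|x-y|$ for all $(x,y)\in\operatorname{supp}(\mu)\times\operatorname{supp}(\nu)$.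
   Context: For a function $\psi:\Omega\to\mathbb{R}$ and a probability measure $\eta$ on $\Omega$, the $c$-transform of $\psi$ on the support of $\eta$ is $\psi^c(y;\eta) := \inf_{x\in\operatorname{supp}(\eta)}\{|x-y| - \psi(x)\}$ for $y\in\Omega$, with $|\cdot|$ the Euclidean norm. *)

theory Defs
  imports "HOL-Probability.Probability"
begin

definition supp_on :: "'a::metric_space set \<Rightarrow> 'a measure \<Rightarrow> 'a set" where
  "supp_on \<Omega> M = {x \<in> \<Omega>. \<forall>e>0. emeasure M (ball x e \<inter> \<Omega>) > 0}"

definition empirical :: "nat \<Rightarrow> (nat \<Rightarrow> 'a) \<Rightarrow> 'a measure" where
  "empirical n X = measure_pmf (map_pmf X (pmf_of_set {..<n}))"

definition ctrans :: "'a::real_normed_vector set \<Rightarrow> ('a \<Rightarrow> real) \<Rightarrow> 'a measure \<Rightarrow> 'a \<Rightarrow> real" where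
  "ctrans \<Omega> \<psi> \<eta> y = (INF x\<in>supp_on \<Omega> \<eta>. norm (x - y) - \<psi> x)"

end

theory Submission
  imports Defs
begin

text \<open>Choosing all samples equal, \<open>X i = x\<close> and \<open>Y i = y\<close>, makes both empirical measures
  Dirac masses. The support of \<open>\<delta>\<^sub>x\<close> is \<open>{x}\<close>, so the \<open>c\<close>-transform against it is
  \<open>|x - y| - \<phi> x\<close>, and the hypothesis \<open>\<J>\<^sub>1 \<le> \<J>\<^sub>2\<close> collapses to \<open>- \<phi> y \<le> |x - y| - \<phi> x\<close>.\<close>

lemma empirical_const:
  assumes "n \<ge> 1"
  shows "empirical n (\<lambda>_. x) = measure_pmf (return_pmf x)"
  using assms unfolding empirical_def by (simp add: map_pmf_const)

lemma supp_on_return_pmf: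
  fixes x :: "'a::metric_space"
  assumes "x \<in> \<Omega>"
  shows "supp_on \<Omega> (measure_pmf (return_pmf x)) = {x}"
proof (intro equalityI subsetI)
  fix z assume z: "z \<in> supp_on \<Omega> (measure_pmf (return_pmf x))"
  show "z \<in> {x}"
  proof (rule ccontr)
    assume "z \<notin> {x}"
    then have "dist z x > 0" by simp
    with z have "emeasure (measure_pmf (return_pmf x)) (ball z (dist z x) \<inter> \<Omega>) > 0"
      unfolding supp_on_def by blast
    then show False by (simp add: indicator_def)
  qed
next
  fix z assume "z \<in> {x}"
  then show "z \<in> supp_on \<Omega> (measure_pmf (return_pmf x))"
    using assms unfolding supp_on_def by (simp add: indicator_def)
qed

lemma ctrans_return_pmf:
  assumes "x \<in> \<Omega>"
  shows "ctrans \<Omega> \<psi> (measure_pmf (return_pmf x)) y = norm (x - y) - \<psi> x"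
  unfolding ctrans_def supp_on_return_pmf[OF assms] by simp

theorem theorem3:
  fixes \<Omega> :: "'a::euclidean_space set"
    and \<mu> \<nu> :: "'a measure"
    and n :: nat
    and \<phi> :: "'a \<Rightarrow> real"
  assumes dom: "open \<Omega>" "connected \<Omega>" "bounded \<Omega>" "\<Omega> \<noteq> {}"
    and mu: "prob_space \<mu>" "sets \<mu> = sets borel" "emeasure \<mu> \<Omega> = 1"
    and nu: "prob_space \<nu>" "sets \<nu> = sets borel" "emeasure \<nu> \<Omega> = 1"
    and n: "n \<ge> 1"
    and phi: "continuous_on \<Omega> \<phi>" "bounded (\<phi> ` \<Omega>)"
    and J: "\<And>X Y :: nat \<Rightarrow> 'a.
              (\<forall>i<n. X i \<in> supp_on \<Omega> \<mu>) \<Longrightarrow> (\<forall>i<n. Y i \<in> supp_on \<Omega> \<nu>) \<Longrightarrow>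
              (\<integral>x. \<phi> x \<partial>empirical n X) + (\<integral>y. - \<phi> y \<partial>empirical n Y)
                \<le> (\<integral>x. \<phi> x \<partial>empirical n X)
                   + (\<integral>y. ctrans \<Omega> \<phi> (empirical n X) y \<partial>empirical n Y)"
  shows "\<forall>x\<in>supp_on \<Omega> \<mu>. \<forall>y\<in>supp_on \<Omega> \<nu>. \<phi> x - \<phi> y \<le> norm (x - y)"
proof (intro ballI)
  fix x y assume x: "x \<in> supp_on \<Omega> \<mu>" and y: "y \<in> supp_on \<Omega> \<nu>"
  have "x \<in> \<Omega>" using x unfolding supp_on_def by blast
  from J[of "\<lambda>_. x" "\<lambda>_. y"] x y
  have "- \<phi> y \<le> ctrans \<Omega> \<phi> (measure_pmf (return_pmf x)) y"
    by (simp add: empirical_const[OF n])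
  also have "\<dots> = norm (x - y) - \<phi> x"
    using \<open>x \<in> \<Omega>\<close> by (rule ctrans_return_pmf)
  finally show "\<phi> x - \<phi> y \<le> norm (x - y)" by simp
qed

end
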